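(* Let $\mathcal{M}$ be a $W^*$-algebra, $p\in\mathcal{M}$ a projection and $u\in\mathcal{M}$ a unitary. The set $\mathcal{S}_{\langle p,u\rangle}$ of all finite products of $p$, $u$ and $u^*$ is an inverse semigroup if and only if $[p,u^kpu^{*k}]=0$ for all $k\in\mathbb{N}$.
   Context: $[a,b]=ab-ba$. An inverse semigroup is a semigroup in which each $s$ has a unique $t$ with $sts=s$, $tst=t$. *)

theory Defs
  imports "HOL-Analysis.Analysis"
begin

text \<open>A complex Banach algebra is encoded as a real Banach algebra with unit together with a
central element iu (playing the role of i*1) with iu*iu = -1; complex scalar multiplication is
then c.x = Re c *R x + Im c *R (iu * x), and we require it to be norm-homogeneous.
The unit is not required to be non-zero, so the zero algebra is allowed.\<close>

class cstar_algebra = real_normed_algebra + monoid_mult + banach +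
  fixes adj :: "'a \<Rightarrow> 'a" and iu :: 'a
  assumes adj_adj: "adj (adj x) = x"
    and adj_add: "adj (x + y) = adj x + adj y"
    and adj_mult: "adj (x * y) = adj y * adj x"
    and adj_scaleR: "adj (r *\<^sub>R x) = r *\<^sub>R adj x"
    and adj_iu: "adj iu = - iu"
    and iu_square: "iu * iu = - 1"
    and iu_central: "iu * x = x * iu"
    and norm_scaleC: "norm (Re c *\<^sub>R x + Im c *\<^sub>R (iu * x)) = cmod c * norm x"
    and cstar_identity: "norm (adj x * x) = norm x ^ 2"

definition scaleC :: "complex \<Rightarrow> 'a::cstar_algebra \<Rightarrow> 'a" where
  "scaleC c x = Re c *\<^sub>R x + Im c *\<^sub>R (iu * x)"

text \<open>A W*-algebra is a C*-algebra that is (isometrically isomorphic to) the dual of a Banach space.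
Equivalently: there is a linear subspace F of the continuous complex-linear functionals on M such
that the canonical map M \<rightarrow> F*, x \<mapsto> (\<phi> \<mapsto> \<phi> x), is isometric and onto.
(Closedness of F is immaterial since F* equals the dual of its closure.)\<close>

definition wstar_algebra :: "'a::cstar_algebra itself \<Rightarrow> bool" where
  "wstar_algebra _ \<longleftrightarrow>
    (\<exists>F :: ('a \<Rightarrow> complex) set.
       (\<forall>\<phi>\<in>F. bounded_linear \<phi> \<and> (\<forall>x. \<phi> (iu * x) = \<i> * \<phi> x)) \<and>
       (\<lambda>_. 0) \<in> F \<and>
       (\<forall>\<phi>\<in>F. \<forall>\<psi>\<in>F. \<forall>c. (\<lambda>x. \<phi> x + c * \<psi> x) \<in> F) \<and>
       (\<forall>x. norm x = (SUP \<phi>\<in>{\<phi>\<in>F. onorm \<phi> \<le> 1}. cmod (\<phi> x))) \<and>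
       (\<forall>\<Psi>. ((\<forall>\<phi>\<in>F. \<forall>\<psi>\<in>F. \<forall>c. \<Psi> (\<lambda>x. \<phi> x + c * \<psi> x) = \<Psi> \<phi> + c * \<Psi> \<psi>) \<and>
              (\<exists>C. \<forall>\<phi>\<in>F. cmod (\<Psi> \<phi>) \<le> C * onorm \<phi>))
            \<longrightarrow> (\<exists>x. \<forall>\<phi>\<in>F. \<Psi> \<phi> = \<phi> x)))"

definition commutator :: "'a::ring \<Rightarrow> 'a \<Rightarrow> 'a" where
  "commutator a b = a * b - b * a"

definition finite_products :: "'a::monoid_mult set \<Rightarrow> 'a set" where
  "finite_products G = {prod_list xs | xs. xs \<noteq> [] \<and> set xs \<subseteq> G}"

definition inverse_semigroup :: "'a::semigroup_mult set \<Rightarrow> bool" where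
  "inverse_semigroup S \<longleftrightarrow> (\<forall>x\<in>S. \<forall>y\<in>S. x * y \<in> S) \<and>
     (\<forall>s\<in>S. \<exists>!t. t \<in> S \<and> s * t * s = s \<and> t * s * t = t)"

end

theory Submission
  imports Defs
begin

text \<open>
  In an inverse semigroup idempotents commute, and p and u^k p u^-k are idempotents of
  S = S<p,u>; this gives one direction.

  Conversely, if p commutes with all u^k p u^-k, these conjugates generate a commutative monoid E
  of projections, stable under conjugation by powers of u. Moving every u or u* in a word to
  the right shows that every element of S has the form e u^n with e \<in> E. Such an element
  satisfies s s* s = s, and if it is idempotent then e u^n e = e forces u^n to act trivially,
  so s = e \<in> E. Hence S is a regular semigroup whose idempotents commute, i.e. an inverse
  semigroup with s* the inverse of s.
\<close>

section \<open>Inverse semigroups and finite products\<close>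

lemma inverse_semigroup_inverse_unique:
  assumes "inverse_semigroup S" and "s \<in> S"
    and "t \<in> S" "s * t * s = s" "t * s * t = t"
    and "t' \<in> S" "s * t' * s = s" "t' * s * t' = t'"
  shows "t = t'"
  using assms unfolding inverse_semigroup_def by metis

lemma inverse_semigroup_idempotent_mult:
  assumes S: "inverse_semigroup S" and "a \<in> S" "b \<in> S"
    and aa: "a * a = a" and bb: "b * b = b"
  shows "a * b * (a * b) = a * b"
proof -
  have abS: "a * b \<in> S" and bxaS: "\<And>x. x \<in> S \<Longrightarrow> b * x * a \<in> S"
    using S \<open>a \<in> S\<close> \<open>b \<in> S\<close> unfolding inverse_semigroup_def by blast+
  obtain x where xS: "x \<in> S" and x1: "a * b * x * (a * b) = a * b" and x2: "x * (a * b) * x = x"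
    using S abS unfolding inverse_semigroup_def by blast
  have aa': "a * (a * z) = a * z" and bb': "b * (b * z) = b * z"
    and x2': "x * (a * (b * (x * z))) = x * z" for z
    using aa bb x2 by (simp_all flip: mult.assoc)
  \<comment> \<open>b x a is another inverse of a b, so it equals x; hence x is idempotent and self-inverse\<close>
  have "a * b * (b * x * a) * (a * b) = a * b"
    using x1 by (simp add: mult.assoc aa' bb')
  moreover have "b * x * a * (a * b) * (b * x * a) = b * x * a"
    by (simp add: mult.assoc aa' bb' x2')
  ultimately have x_eq: "x = b * x * a"
    using inverse_semigroup_inverse_unique[OF S abS xS x1 x2 bxaS[OF xS]] by blast
  have "b * x * a * (b * x * a) = b * x * a"
    by (simp add: mult.assoc x2')
  then have xx: "x * x = x"
    by (simp flip: x_eq)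
  have "a * b = x"
    using inverse_semigroup_inverse_unique[OF S xS abS x2 x1 xS] xx by simp
  then show ?thesis using xx by simp
qed

lemma inverse_semigroup_idempotents_commute:
  assumes S: "inverse_semigroup S" and "e \<in> S" "f \<in> S"
    and ee: "e * e = e" and ff: "f * f = f"
  shows "e * f = f * e"
proof -
  have efS: "e * f \<in> S" and feS: "f * e \<in> S"
    using S \<open>e \<in> S\<close> \<open>f \<in> S\<close> unfolding inverse_semigroup_def by blast+
  have ef: "e * f * (e * f) = e * f" and fe: "f * e * (f * e) = f * e"
    using inverse_semigroup_idempotent_mult assms by blast+
  have ee': "e * (e * z) = e * z" and ff': "f * (f * z) = f * z" for z
    by (simp_all add: ee ff flip: mult.assoc)
  \<comment> \<open>both e f and f e are inverses of e f\<close>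
  have "e * f * (f * e) * (e * f) = e * f" "f * e * (e * f) * (f * e) = f * e"
    using ef fe by (simp_all add: mult.assoc ee' ff')
  moreover have "e * f * (e * f) * (e * f) = e * f"
    using ef by simp
  ultimately show ?thesis
    using inverse_semigroup_inverse_unique[OF S efS efS _ _ feS] by metis
qed

lemma inverse_semigroupI:
  assumes mult_closed: "\<And>x y. x \<in> S \<Longrightarrow> y \<in> S \<Longrightarrow> x * y \<in> S"
    and regular: "\<And>s. s \<in> S \<Longrightarrow> \<exists>t\<in>S. s * t * s = s \<and> t * s * t = t"
    and idempotents_commute:
      "\<And>e f. e \<in> S \<Longrightarrow> f \<in> S \<Longrightarrow> e * e = e \<Longrightarrow> f * f = f \<Longrightarrow> e * f = f * e"
  shows "inverse_semigroup S"
  unfolding inverse_semigroup_def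
proof (intro conjI ballI mult_closed)
  fix s assume sS: "s \<in> S"
  have "t = t'"
    if tS: "t \<in> S" and t: "s * t * s = s" "t * s * t = t"
      and t'S: "t' \<in> S" and t': "s * t' * s = s" "t' * s * t' = t'" for t t'
  proof -
    have t_assoc: "s * (t * s) = s" "t * (s * t) = t"
        "s * (t * (s * z)) = s * z" "t * (s * (t * z)) = t * z"
      and t'_assoc: "s * (t' * s) = s" "t' * (s * t') = t'"
        "s * (t' * (s * z)) = s * z" "t' * (s * (t' * z)) = t' * z" for z
      using t t' by (simp_all flip: mult.assoc)
    have "t * s * (t * s) = t * s" "t' * s * (t' * s) = t' * s"
         "s * t * (s * t) = s * t" "s * t' * (s * t') = s * t'"
      by (simp_all add: mult.assoc t_assoc t'_assoc)
    then have comm: "t * s * (t' * s) = t' * s * (t * s)" "s * t' * (s * t) = s * t * (s * t')"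
      using idempotents_commute mult_closed sS tS t'S by blast+
    have "t = t * s * (t' * s) * t"
      by (simp add: mult.assoc t_assoc t'_assoc)
    also have "\<dots> = t' * s * (t * s) * t"
      by (simp only: comm)
    also have "\<dots> = t' * (s * t' * (s * t))"
      by (simp add: mult.assoc t_assoc t'_assoc)
    also have "\<dots> = t' * (s * t * (s * t'))"
      by (simp only: comm)
    also have "\<dots> = t'"
      by (simp add: mult.assoc t_assoc t'_assoc)
    finally show ?thesis .
  qed
  then show "\<exists>!t. t \<in> S \<and> s * t * s = s \<and> t * s * t = t"
    using regular[OF sS] by blast
qed

lemma finite_products_mult:
  assumes "s \<in> finite_products G" and "t \<in> finite_products G"
  shows "s * t \<in> finite_products G"
proof -
  obtain xs ys where "xs \<noteq> []" "set xs \<subseteq> G" "s = prod_list xs"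
    and "ys \<noteq> []" "set ys \<subseteq> G" "t = prod_list ys"
    using assms unfolding finite_products_def by blast
  then have "xs @ ys \<noteq> [] \<and> set (xs @ ys) \<subseteq> G \<and> s * t = prod_list (xs @ ys)"
    by simp
  then show ?thesis
    unfolding finite_products_def by blast
qed

lemma power_conjugate_in_finite_products:
  assumes "p \<in> G" "u \<in> G" "v \<in> G"
  shows "u ^ k * p * v ^ k \<in> finite_products G"
proof -
  have "u ^ k * p * v ^ k = prod_list (replicate k u @ p # replicate k v)"
    by (simp add: prod_list_replicate mult.assoc)
  then show ?thesis
    using assms unfolding finite_products_def by fastforce
qed

section \<open>Integer powers of an invertible element\<close>

definition zpower :: "'a::monoid_mult \<Rightarrow> 'a \<Rightarrow> int \<Rightarrow> 'a" where
  "zpower u v k = (if 0 \<le> k then u ^ nat k else v ^ nat (- k))"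

locale mutual_inverses =
  fixes u v :: "'a::monoid_mult"
  assumes right_inverse: "u * v = 1" and left_inverse: "v * u = 1"
begin

abbreviation U :: "int \<Rightarrow> 'a" where "U \<equiv> zpower u v"

lemma zpower_of_nat [simp]: "U (int n) = u ^ n"
  by (simp add: zpower_def)

lemma zpower_neg_of_nat [simp]: "U (- int n) = v ^ n"
  unfolding zpower_def by (cases "n = 0") simp_all

lemma zpower_zero [simp]: "U 0 = 1"
  by (simp add: zpower_def)

lemma zpower_succ: "U (k + 1) = U k * u"
proof (cases "0 \<le> k")
  case True
  then have "nat (k + 1) = Suc (nat k)" by simp
  with True show ?thesis by (simp add: zpower_def power_commutes)
next
  case False
  define m where "m = nat (- k) - 1"
  have m: "k = - int (Suc m)"
    using False by (simp add: m_def)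
  have "v ^ Suc m * u = v ^ m"
    by (simp add: power_Suc2 mult.assoc left_inverse del: power_Suc)
  then show ?thesis
    using m zpower_neg_of_nat[of m] zpower_neg_of_nat[of "Suc m"] by simp
qed

lemma zpower_pred: "U (k - 1) = U k * v"
  using zpower_succ[of "k - 1"] by (simp add: mult.assoc right_inverse)

lemma zpower_add: "U (a + b) = U a * U b"
proof (induction b rule: int_induct[where k = 0])
  case (step1 i)
  have "U (a + (i + 1)) = U (a + i) * u"
    using zpower_succ[of "a + i"] by (simp only: add.assoc)
  also have "\<dots> = U a * U (i + 1)"
    by (simp only: step1.IH zpower_succ[of i] mult.assoc)
  finally show ?case .
next
  case (step2 i)
  have "U (a + (i - 1)) = U (a + i) * v"
    using zpower_pred[of "a + i"] by (simp only: add_diff_eq)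
  also have "\<dots> = U a * U (i - 1)"
    by (simp only: step2.IH zpower_pred[of i] mult.assoc)
  finally show ?case .
qed simp

lemma zpower_cancel [simp]: "U k * U (- k) = 1" "U (- k) * U k = 1"
  using zpower_add[of k "- k"] zpower_add[of "- k" k] by simp_all

lemma zpower_cancel_left [simp]: "U k * (U (- k) * x) = x" "U (- k) * (U k * x) = x"
  by (simp_all flip: mult.assoc)

lemma zpower_one: "U 1 = u" and zpower_minus_one: "U (- 1) = v"
  using zpower_of_nat[of 1] zpower_neg_of_nat[of 1] by simp_all

lemma zpower_conjugate_shift: "U j * (e * U n) = (U j * e * U (- j)) * U (j + n)"
  by (simp add: zpower_add mult.assoc)

lemma power_cancel_left [simp]: "v ^ n * (u ^ n * x) = x" "u ^ n * (v ^ n * x) = x"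
  using zpower_cancel_left[of "int n"] by simp_all

lemma power_cancel [simp]: "v ^ n * u ^ n = 1" "u ^ n * v ^ n = 1"
  using zpower_cancel[of "int n"] by simp_all

lemma power_conjugate_idempotent:
  assumes "p * p = p"
  shows "u ^ n * p * v ^ n * (u ^ n * p * v ^ n) = u ^ n * p * v ^ n"
proof -
  have "u ^ n * p * v ^ n * (u ^ n * p * v ^ n) = u ^ n * (p * p) * v ^ n"
    by (simp add: mult.assoc)
  with assms show ?thesis
    by simp
qed

text \<open>Conjugating the commutation of p with u^n p v^n by v^n gives the commutation of p with
  v^n p u^n, so the hypothesis for natural exponents covers all integer exponents.\<close>
lemma commutes_zpower_conjugates:
  assumes nat_commute: "\<And>n. p * (u ^ n * p * v ^ n) = u ^ n * p * v ^ n * p"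
  shows "p * (U k * p * U (- k)) = U k * p * U (- k) * p"
proof (cases k rule: int_cases2)
  case (nonneg n)
  then show ?thesis using nat_commute[of n] by simp
next
  case (nonpos n)
  have "v ^ n * (p * (u ^ n * p * v ^ n)) * u ^ n = v ^ n * (u ^ n * p * v ^ n * p) * u ^ n"
    by (simp only: nat_commute)
  then have "p * (v ^ n * p * u ^ n) = v ^ n * p * u ^ n * p"
    by (simp add: mult.assoc)
  with nonpos show ?thesis by simp
qed

end

section \<open>Commuting conjugates of an idempotent\<close>

text \<open>The monoid generated by the conjugates u^k p u^-k, k \<in> \<int>.\<close>
inductive_set conjugate_monoid :: "'a::monoid_mult \<Rightarrow> 'a \<Rightarrow> 'a \<Rightarrow> 'a set"
  for u v p :: 'a
where
  one: "1 \<in> conjugate_monoid u v p"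
| mult_left: "e \<in> conjugate_monoid u v p \<Longrightarrow> p * e \<in> conjugate_monoid u v p"
| conjugate: "e \<in> conjugate_monoid u v p \<Longrightarrow>
    zpower u v k * e * zpower u v (- k) \<in> conjugate_monoid u v p"

context mutual_inverses
begin

lemma prod_list_normal_form:
  assumes "set xs \<subseteq> {p, u, v}"
  shows "\<exists>e \<in> conjugate_monoid u v p. \<exists>n. prod_list xs = e * U n"
  using assms
proof (induction xs)
  case Nil
  have "prod_list [] = 1 * U 0"
    by simp
  then show ?case
    using conjugate_monoid.one by blast
next
  case (Cons x xs)
  then obtain e n where e: "e \<in> conjugate_monoid u v p" and xs: "prod_list xs = e * U n"
    by auto
  from Cons.prems consider "x = p" | "x = U 1" | "x = U (- 1)"
    by (auto simp: zpower_one zpower_minus_one)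
  then show ?case
  proof cases
    case 1
    then have "prod_list (x # xs) = (p * e) * U n"
      by (simp add: xs mult.assoc)
    then show ?thesis
      using conjugate_monoid.mult_left[OF e] by blast
  next
    case 2
    then have "prod_list (x # xs) = (U 1 * e * U (- 1)) * U (1 + n)"
      by (simp add: xs zpower_conjugate_shift)
    then show ?thesis
      using conjugate_monoid.conjugate[OF e] by blast
  next
    case 3
    then have "prod_list (x # xs) = (U (- 1) * e * U (- (- 1))) * U (- 1 + n)"
      by (simp only: xs zpower_conjugate_shift prod_list.Cons)
    then show ?thesis
      using conjugate_monoid.conjugate[OF e] by blast
  qed
qed

end

locale commuting_conjugates = mutual_inverses +
  fixes p :: 'a
  assumes idempotent: "p * p = p"
    and commutes_conjugates: "p * (U k * p * U (- k)) = U k * p * U (- k) * p"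
begin

abbreviation E :: "'a set" where "E \<equiv> conjugate_monoid u v p"

abbreviation pconj :: "int \<Rightarrow> 'a" where "pconj k \<equiv> U k * p * U (- k)"

lemma pconj_shift: "pconj k * U j = U j * pconj (k - j)"
proof -
  have "U k = U j * U (k - j)" and "U (- k) * U j = U (- (k - j))"
    using zpower_add[of j "k - j"] zpower_add[of "- k" j] by simp_all
  then show ?thesis
    by (simp add: mult.assoc)
qed

lemma pconj_commutes: "f \<in> E \<Longrightarrow> pconj k * f = f * pconj k"
proof (induction f arbitrary: k rule: conjugate_monoid.induct)
  case (mult_left e)
  have "pconj k * (p * e) = pconj k * p * e"
    by (simp only: mult.assoc)
  also have "\<dots> = p * pconj k * e"
    by (simp only: commutes_conjugates)
  also have "\<dots> = p * (pconj k * e)"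
    by (simp only: mult.assoc)
  also have "\<dots> = p * e * pconj k"
    using mult_left.IH by (simp add: mult.assoc)
  finally show ?case .
next
  case (conjugate e j)
  have "pconj k * (U j * e * U (- j)) = U j * (pconj (k - j) * e) * U (- j)"
    by (simp only: pconj_shift flip: mult.assoc)
  also have "\<dots> = U j * e * (pconj (k - j) * U (- j))"
    by (simp only: conjugate.IH, simp only: mult.assoc)
  also have "\<dots> = U j * e * U (- j) * pconj k"
    using pconj_shift[of "k - j" "- j"] by (simp add: mult.assoc)
  finally show ?case .
qed simp

lemma conjugate_monoid_commute: "e \<in> E \<Longrightarrow> f \<in> E \<Longrightarrow> e * f = f * e"
proof (induction e arbitrary: f rule: conjugate_monoid.induct)
  case (mult_left e)
  have pf: "p * f = f * p"
    using pconj_commutes[OF mult_left.prems, of 0] by simp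
  have "p * e * f = p * f * e"
    by (simp only: mult.assoc mult_left.IH[OF mult_left.prems])
  also have "\<dots> = f * (p * e)"
    by (simp only: pf mult.assoc)
  finally show ?case .
next
  case (conjugate e j)
  have "U (- j) * f * U (- (- j)) \<in> E"
    using conjugate_monoid.conjugate[OF conjugate.prems] .
  then have commute: "e * (U (- j) * f * U j) = U (- j) * f * U j * e"
    using conjugate.IH by simp
  have "U j * e * U (- j) * f = U j * (e * (U (- j) * f * U j)) * U (- j)"
    by (simp add: mult.assoc)
  also have "\<dots> = f * (U j * e * U (- j))"
    by (simp only: commute, simp add: mult.assoc)
  finally show ?case .
qed simp

lemma conjugate_monoid_idempotent: "e \<in> E \<Longrightarrow> e * e = e"
proof (induction e rule: conjugate_monoid.induct)
  case (mult_left e)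
  have pe: "p * e = e * p"
    using conjugate_monoid_commute[OF conjugate_monoid.mult_left[OF conjugate_monoid.one]
        mult_left.hyps] by simp
  have "p * e * (p * e) = p * (e * p) * e"
    by (simp only: mult.assoc)
  also have "\<dots> = p * p * (e * e)"
    by (simp only: pe[symmetric], simp only: mult.assoc)
  finally have "p * e * (p * e) = p * p * (e * e)" .
  then show ?case
    using idempotent mult_left.IH by simp
next
  case (conjugate e k)
  have "U k * e * U (- k) * (U k * e * U (- k)) = U k * (e * e) * U (- k)"
    by (simp add: mult.assoc)
  then show ?case
    using conjugate.IH by simp
qed simp

end

section \<open>Projections in a C*-algebra\<close>

lemma adj_one [simp]: "adj (1 :: 'a::cstar_algebra) = 1"
  using adj_mult[of "adj 1" "1 :: 'a"] by (simp add: adj_adj)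

lemma adj_power: "adj ((x :: 'a::cstar_algebra) ^ n) = adj x ^ n"
  by (induction n) (simp_all add: adj_mult power_commutes)

lemma adj_prod_list: "adj (prod_list (xs :: 'a::cstar_algebra list)) = prod_list (rev (map adj xs))"
  by (induction xs) (simp_all add: adj_mult)

lemma adj_zpower: "adj (zpower u (adj u) k) = zpower u (adj u) (- k)"
  by (simp add: zpower_def adj_power adj_adj)

lemma finite_products_adj:
  assumes adj_closed: "\<And>x. x \<in> G \<Longrightarrow> adj x \<in> G" and "s \<in> finite_products G"
  shows "adj s \<in> finite_products (G :: 'a::cstar_algebra set)"
proof -
  obtain xs where "xs \<noteq> []" "set xs \<subseteq> G" "s = prod_list xs"
    using assms(2) unfolding finite_products_def by blast
  then have "rev (map adj xs) \<noteq> [] \<and> set (rev (map adj xs)) \<subseteq> G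
      \<and> adj s = prod_list (rev (map adj xs))"
    using adj_closed by (auto simp: adj_prod_list)
  then show ?thesis
    unfolding finite_products_def by blast
qed

locale projection_commuting_conjugates = commuting_conjugates u "adj u" p
  for u p :: "'a::cstar_algebra" +
  assumes self_adjoint: "adj p = p"
begin

abbreviation S :: "'a set" where "S \<equiv> finite_products {p, u, adj u}"

lemma conjugate_monoid_self_adjoint: "e \<in> E \<Longrightarrow> adj e = e"
proof (induction e rule: conjugate_monoid.induct)
  case (mult_left e)
  then show ?case
    using conjugate_monoid_commute[OF conjugate_monoid.mult_left[OF conjugate_monoid.one]
        mult_left.hyps] by (simp add: adj_mult self_adjoint)
qed (simp_all add: adj_mult adj_zpower mult.assoc)

lemma finite_products_normal_form: "s \<in> S \<Longrightarrow> \<exists>e \<in> E. \<exists>n. s = e * U n"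
  unfolding finite_products_def using prod_list_normal_form by blast

lemma adj_normal_form: "e \<in> E \<Longrightarrow> adj (e * U n) = U (- n) * e"
  by (simp add: adj_mult adj_zpower conjugate_monoid_self_adjoint)

lemma finite_products_regular: "s \<in> S \<Longrightarrow> s * adj s * s = s"
proof -
  assume "s \<in> S"
  then obtain e n where e: "e \<in> E" and s: "s = e * U n"
    using finite_products_normal_form by blast
  have "s * adj s * s = e * (U n * U (- n)) * (e * e) * U n"
    using e by (simp add: s adj_normal_form mult.assoc)
  then show ?thesis
    by (simp add: s conjugate_monoid_idempotent[OF e])
qed

lemma idempotent_in_conjugate_monoid: "s \<in> S \<Longrightarrow> s * s = s \<Longrightarrow> s \<in> E"
proof -
  assume "s \<in> S" and ss: "s * s = s"
  then obtain e n where e: "e \<in> E" and s: "s = e * U n"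
    using finite_products_normal_form by blast
  define Q where "Q = U (- n) * e * U (- (- n))"
  have Q: "Q \<in> E"
    unfolding Q_def using conjugate_monoid.conjugate[OF e] .
  have ewe: "e * U n * e = e"
    using arg_cong[OF ss, of "\<lambda>x. x * U (- n)"] by (simp add: s mult.assoc)
  have "Q * e = U (- n) * e"
    using ewe by (simp add: Q_def mult.assoc)
  then have "adj (Q * e) = adj (U (- n) * e)"
    by simp
  then have "e * Q = e * U n"
    by (simp add: adj_mult adj_zpower conjugate_monoid_self_adjoint[OF Q]
        conjugate_monoid_self_adjoint[OF e])
  have "e = e * Q * e"
    using ewe by (simp add: \<open>e * Q = e * U n\<close>)
  also have "\<dots> = e * e * Q"
    by (simp only: mult.assoc conjugate_monoid_commute[OF Q e])
  also have "\<dots> = s"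
    by (simp add: conjugate_monoid_idempotent[OF e] \<open>e * Q = e * U n\<close> s)
  finally show ?thesis
    using e by simp
qed

lemma inverse_semigroup_finite_products: "inverse_semigroup S"
proof (rule inverse_semigroupI)
  fix s assume s: "s \<in> S"
  have "\<And>x. x \<in> {p, u, adj u} \<Longrightarrow> adj x \<in> {p, u, adj u}"
    by (auto simp: self_adjoint adj_adj)
  then have "adj s \<in> S"
    using finite_products_adj s by blast
  moreover have "s * adj s * s = s"
    using finite_products_regular[OF s] .
  moreover from this have "adj s * s * adj s = adj s"
    using adj_mult[of "s * adj s" s] by (simp add: adj_mult adj_adj mult.assoc)
  ultimately show "\<exists>t\<in>S. s * t * s = s \<and> t * s * t = t"
    by blast
next
  fix e f assume "e \<in> S" "f \<in> S" "e * e = e" "f * f = f"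
  then show "e * f = f * e"
    using idempotent_in_conjugate_monoid conjugate_monoid_commute by blast
qed (rule finite_products_mult)

end

theorem proposition3p9:
  fixes p u :: "'a::cstar_algebra"
  assumes "wstar_algebra TYPE('a)"
    and "adj p = p" and "p * p = p"
    and "adj u * u = 1" and "u * adj u = 1"
  shows "inverse_semigroup (finite_products {p, u, adj u}) \<longleftrightarrow>
         (\<forall>k::nat. commutator p (u ^ k * p * adj u ^ k) = 0)"
proof -
  interpret mutual_inverses u "adj u"
    using assms(4,5) by unfold_locales
  let ?S = "finite_products {p, u, adj u}"
  have conjugate_in_S: "u ^ k * p * adj u ^ k \<in> ?S" for k
    by (rule power_conjugate_in_finite_products) simp_all
  have "inverse_semigroup ?S \<longleftrightarrow> (\<forall>k. p * (u ^ k * p * adj u ^ k) = u ^ k * p * adj u ^ k * p)"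
  proof
    assume inv: "inverse_semigroup ?S"
    have "p \<in> ?S"
      using conjugate_in_S[of 0] by simp
    then show "\<forall>k. p * (u ^ k * p * adj u ^ k) = u ^ k * p * adj u ^ k * p"
      using inverse_semigroup_idempotents_commute[OF inv _ conjugate_in_S assms(3)
          power_conjugate_idempotent[OF assms(3)]] by blast
  next
    assume "\<forall>k. p * (u ^ k * p * adj u ^ k) = u ^ k * p * adj u ^ k * p"
    then interpret projection_commuting_conjugates u p
      using assms(2,3) commutes_zpower_conjugates by unfold_locales auto
    show "inverse_semigroup ?S"
      by (rule inverse_semigroup_finite_products)
  qed
  then show ?thesis
    by (simp add: commutator_def)
qed

end
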